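(* In the two-valued atomic model under the Shapley scheme, consider a winning pool $S$ consisting of one large player (player $1$, stake $a$) and $k$ small players (stake $1$). If $k<h$, then $\phi_1(S)=\frac{k-h+a+1}{k+1}$ and each small player in $S$ receives $\frac{h-a}{k(k+1)}$. If $k\ge h$, then $\phi_1(S)=\frac{a}{k+1}$ and each small player in $S$ receives $\frac{k+1-a}{k(k+1)}$.
   Context: Atomic model with threshold $h$; every player has stake either $1$ (small) or $a$ (large), where $h,a$ are integers with $2\le a\le h-1$. A pool $S$ has reward $\rho(S)=1$ if its total stake is at least $h$ (winning) and $0$ otherwise. Shapley scheme: player $i$ in pool $S$ receives $\phi_i(S)=\sum_{T\subseteq S\setminus\{i\}}\frac{|T|!(|S|-|T|-1)!}{|S|!}(\rho(T\cup\{i\})-\rho(T))$. *)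

theory Defs
  imports Main Complex_Main
begin

definition stake :: "('a \<Rightarrow> nat) \<Rightarrow> 'a set \<Rightarrow> nat" where
  "stake w T = (\<Sum>i\<in>T. w i)"

definition rho :: "nat \<Rightarrow> ('a \<Rightarrow> nat) \<Rightarrow> 'a set \<Rightarrow> real" where
  "rho h w T = (if stake w T \<ge> h then 1 else 0)"

definition shapley :: "nat \<Rightarrow> ('a \<Rightarrow> nat) \<Rightarrow> 'a set \<Rightarrow> 'a \<Rightarrow> real" where
  "shapley h w S i = (\<Sum>T\<in>Pow (S - {i}).
      (fact (card T) * fact (card S - card T - 1) / fact (card S))
      * (rho h w (insert i T) - rho h w T))"

end

(* The large player's marginal contribution to a coalition T of small players depends only on
   |T|: it is 1 exactly when h - a <= |T| < h.  Averaged with the Shapley weights, its value is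
   the fraction of the sizes 0, ..., k lying in that window.  The small players are
   interchangeable and the Shapley value is efficient (the values of the members of S add up to
   rho(S) - rho({}) = 1), so the small players share equally what the large player leaves. *)

theory Submission
  imports Defs "HOL-Combinatorics.Transposition"
begin

definition shapley_weight :: "nat \<Rightarrow> nat \<Rightarrow> real" where
  "shapley_weight n t = fact t * fact (n - t - 1) / fact n"

definition shapley_value :: "('a set \<Rightarrow> real) \<Rightarrow> 'a set \<Rightarrow> 'a \<Rightarrow> real" where
  "shapley_value v S i =
     (\<Sum>T\<in>Pow (S - {i}). shapley_weight (card S) (card T) * (v (insert i T) - v T))"

lemma shapley_eq_shapley_value: "shapley h w = shapley_value (rho h w)"
  by (simp add: fun_eq_iff shapley_def shapley_value_def shapley_weight_def)

lemma binomial_mult_shapley_weight: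
  assumes "t \<le> n"
  shows "real (n choose t) * shapley_weight (Suc n) t = 1 / (real n + 1)"
  using assms by (simp add: shapley_weight_def binomial_fact field_simps add_nonneg_eq_0_iff)

lemma shapley_weight_efficiency_coeff:
  assumes "0 < n" "u \<le> n"
  shows "real u * shapley_weight n (u - 1) - real (n - u) * shapley_weight n u
           = of_bool (u = n) - of_bool (u = 0)"
proof -
  consider "u = 0 \<or> u = n" | "0 < u" "u < n" using assms by linarith
  then show ?thesis
  proof cases
    case 1
    then show ?thesis using assms by (auto simp: shapley_weight_def fact_reduce[of n])
  next
    case 2
    then have "fact u = real u * fact (u - 1)" "fact (n - u) = real (n - u) * fact (n - u - 1)"
      by (simp_all add: fact_reduce)
    then show ?thesis using 2 by (simp add: shapley_weight_def)
  qed
qed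

lemma sum_Pow_card:
  assumes "finite A"
  shows "(\<Sum>T\<in>Pow A. f (card T)) = (\<Sum>t\<le>card A. of_nat (card A choose t) * f t)"
proof -
  have "(\<Sum>T\<in>Pow A. f (card T)) = (\<Sum>t\<le>card A. \<Sum>T\<in>{T\<in>Pow A. card T = t}. f (card T))"
    by (rule sum.group[symmetric]) (auto simp: assms card_mono)
  also have "\<dots> = (\<Sum>t\<le>card A. of_nat (card A choose t) * f t)"
  proof (rule sum.cong[OF refl])
    fix t
    have "{T\<in>Pow A. card T = t} = {T. T \<subseteq> A \<and> card T = t}" by auto
    then show "(\<Sum>T\<in>{T\<in>Pow A. card T = t}. f (card T)) = of_nat (card A choose t) * f t"
      using n_subsets[OF assms] by simp
  qed
  finally show ?thesis .
qed

lemma shapley_value_card_marginal: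
  assumes "finite S" "i \<in> S"
    and "\<And>T. T \<subseteq> S - {i} \<Longrightarrow> v (insert i T) - v T = g (card T)"
  shows "shapley_value v S i = (\<Sum>t<card S. g t) / card S"
proof -
  obtain n where n: "card S = Suc n" "card (S - {i}) = n"
    using assms(1,2) by (cases "card S") (auto simp: card_Diff_singleton)
  have "shapley_value v S i = (\<Sum>T\<in>Pow (S - {i}). shapley_weight (Suc n) (card T) * g (card T))"
    unfolding shapley_value_def n(1) using assms(3) by (simp add: Pow_def)
  also have "\<dots> = (\<Sum>t\<le>n. real (n choose t) * (shapley_weight (Suc n) t * g t))"
    using sum_Pow_card[of "S - {i}" "\<lambda>t. shapley_weight (Suc n) t * g t"] assms(1)
    by (simp add: n(2))
  also have "\<dots> = (\<Sum>t\<le>n. g t / (real n + 1))"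
    by (rule sum.cong) (simp_all add: binomial_mult_shapley_weight mult.assoc[symmetric])
  also have "\<dots> = (\<Sum>t<card S. g t) / card S"
    by (simp add: n(1) sum_divide_distrib lessThan_Suc_atMost add.commute)
  finally show ?thesis .
qed

lemma sum_sum_Pow_Diff_insert:
  assumes "finite S"
  shows "(\<Sum>i\<in>S. \<Sum>T\<in>Pow (S - {i}). F (card T) (insert i T))
           = (\<Sum>U\<in>Pow S. of_nat (card U) * F (card U - 1) U)"
proof -
  have "(\<Sum>T\<in>Pow (S - {i}). F (card T) (insert i T)) = (\<Sum>U\<in>{U\<in>Pow S. i \<in> U}. F (card U - 1) U)"
    if "i \<in> S" for i
    by (rule sum.reindex_bij_witness[where i = "\<lambda>U. U - {i}" and j = "insert i"])
      (use that assms in \<open>auto simp: card_insert_if finite_subset\<close>)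
  then have "(\<Sum>i\<in>S. \<Sum>T\<in>Pow (S - {i}). F (card T) (insert i T))
      = (\<Sum>i\<in>S. \<Sum>U\<in>{U\<in>Pow S. i \<in> U}. F (card U - 1) U)"
    by (rule sum.cong[OF refl])
  also have "\<dots> = (\<Sum>U\<in>Pow S. \<Sum>i\<in>{i\<in>S. i \<in> U}. F (card U - 1) U)"
    using assms by (intro sum.swap_restrict) simp_all
  also have "\<dots> = (\<Sum>U\<in>Pow S. of_nat (card U) * F (card U - 1) U)"
  proof (rule sum.cong[OF refl])
    fix U assume "U \<in> Pow S"
    then have "{i\<in>S. i \<in> U} = U" by auto
    then show "(\<Sum>i\<in>{i\<in>S. i \<in> U}. F (card U - 1) U) = of_nat (card U) * F (card U - 1) U"
      by simp
  qed
  finally show ?thesis .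
qed

lemma sum_sum_Pow_Diff:
  assumes "finite S"
  shows "(\<Sum>i\<in>S. \<Sum>T\<in>Pow (S - {i}). F T) = (\<Sum>T\<in>Pow S. of_nat (card S - card T) * F T)"
proof -
  have "(\<Sum>i\<in>S. \<Sum>T\<in>Pow (S - {i}). F T) = (\<Sum>i\<in>S. \<Sum>T\<in>{T\<in>Pow S. i \<notin> T}. F T)"
    by (rule sum.cong[OF refl]) (rule sum.cong, auto)
  also have "\<dots> = (\<Sum>T\<in>Pow S. \<Sum>i\<in>{i\<in>S. i \<notin> T}. F T)"
    using assms by (intro sum.swap_restrict) simp_all
  also have "\<dots> = (\<Sum>T\<in>Pow S. of_nat (card S - card T) * F T)"
  proof (rule sum.cong[OF refl])
    fix T assume "T \<in> Pow S"
    then have "card {i\<in>S. i \<notin> T} = card S - card T"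
      using assms by (simp add: set_diff_eq[symmetric] card_Diff_subset finite_subset)
    then show "(\<Sum>i\<in>{i\<in>S. i \<notin> T}. F T) = of_nat (card S - card T) * F T"
      by simp
  qed
  finally show ?thesis .
qed

lemma shapley_value_efficient:
  assumes "finite S"
  shows "(\<Sum>i\<in>S. shapley_value v S i) = v S - v {}"
proof (cases "S = {}")
  case False
  define n where "n = card S"
  define c where "c = shapley_weight n"
  have "0 < n" using False assms by (simp add: n_def card_gt_0_iff)
  have "(\<Sum>i\<in>S. shapley_value v S i)
      = (\<Sum>U\<in>Pow S. (real (card U) * c (card U - 1) - real (n - card U) * c (card U)) * v U)"
    using sum_sum_Pow_Diff_insert[OF assms, of "\<lambda>t U. c t * v U"]
      sum_sum_Pow_Diff[OF assms, of "\<lambda>T. c (card T) * v T"]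
    unfolding shapley_value_def c_def[symmetric] n_def[symmetric]
    by (simp add: right_diff_distrib left_diff_distrib sum_subtractf mult.assoc)
  also have "\<dots> = (\<Sum>U\<in>Pow S. (of_bool (U = S) - of_bool (U = {})) * v U)"
  proof (rule sum.cong[OF refl])
    fix U assume "U \<in> Pow S"
    then have "card U \<le> n" "card U = n \<longleftrightarrow> U = S" "card U = 0 \<longleftrightarrow> U = {}"
      using assms card_subset_eq[OF assms] finite_subset[OF _ assms] by (auto simp: n_def card_mono)
    then show "(real (card U) * c (card U - 1) - real (n - card U) * c (card U)) * v U
        = (of_bool (U = S) - of_bool (U = {})) * v U"
      using shapley_weight_efficiency_coeff[OF \<open>0 < n\<close>] by (simp add: c_def)
  qed
  also have "\<dots> = v S - v {}"
    using assms by (simp add: left_diff_distrib sum_subtractf)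
  finally show ?thesis .
qed simp

lemma shapley_value_bij_invariant:
  assumes \<pi>: "bij_betw \<pi> S S" and v: "\<And>T. T \<subseteq> S \<Longrightarrow> v (\<pi> ` T) = v T" and "i \<in> S"
  shows "shapley_value v S (\<pi> i) = shapley_value v S i"
proof -
  have bij: "bij_betw (image \<pi>) (Pow (S - {i})) (Pow (S - {\<pi> i}))"
    by (intro bij_betw_image_Pow bij_betw_DiffI[OF \<pi>]) (use \<open>i \<in> S\<close> bij_betwE[OF \<pi>] in auto)
  have inj: "inj_on \<pi> T" if "T \<subseteq> S" for T
    using inj_on_subset[OF bij_betw_imp_inj_on[OF \<pi>] that] .
  show ?thesis
    unfolding shapley_value_def sum.reindex_bij_betw[OF bij, symmetric]
  proof (rule sum.cong[OF refl])
    fix T assume "T \<in> Pow (S - {i})"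
    then have "T \<subseteq> S" "insert i T \<subseteq> S" using \<open>i \<in> S\<close> by auto
    then show "shapley_weight (card S) (card (\<pi> ` T)) * (v (insert (\<pi> i) (\<pi> ` T)) - v (\<pi> ` T))
        = shapley_weight (card S) (card T) * (v (insert i T) - v T)"
      using v inj card_image by (metis image_insert)
  qed
qed

lemma stake_insert: "finite T \<Longrightarrow> p \<notin> T \<Longrightarrow> stake w (insert p T) = w p + stake w T"
  by (simp add: stake_def)

lemma stake_const: "\<forall>x\<in>T. w x = c \<Longrightarrow> stake w T = c * card T"
  by (simp add: stake_def)

lemma rho_image: "inj_on f T \<Longrightarrow> \<forall>x\<in>T. w (f x) = w x \<Longrightarrow> rho h w (f ` T) = rho h w T"
  by (simp add: rho_def stake_def sum.reindex)

(* With truncated subtraction, card K + 1 - m is the number of t <= card K with m <= t. *)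
lemma shapley_large_player:
  assumes "finite K" "p \<notin> K" "\<forall>j\<in>K. w j = 1"
  shows "shapley h w (insert p K) p
           = (real (card K + 1 - (h - w p)) - real (card K + 1 - h)) / (card K + 1)"
proof -
  have "shapley h w (insert p K) p
      = (\<Sum>t<card (insert p K). of_bool (h - w p \<le> t) - of_bool (h \<le> t)) / card (insert p K)"
    unfolding shapley_eq_shapley_value
  proof (rule shapley_value_card_marginal)
    fix T assume "T \<subseteq> insert p K - {p}"
    then have "finite T" "p \<notin> T" "stake w T = card T"
      using assms finite_subset stake_const[of T w 1] by auto
    then show "rho h w (insert p T) - rho h w T = of_bool (h - w p \<le> card T) - of_bool (h \<le> card T)"
      by (auto simp: rho_def stake_insert)
  qed (use assms in auto)
  moreover have "{..<n} \<inter> {t. m \<le> t} = {m..<n}" for m n :: nat by auto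
  ultimately show ?thesis using assms(1,2) by (simp add: sum_subtractf)
qed

lemma shapley_small_player:
  assumes "finite K" "p \<notin> K" "\<forall>j\<in>K. w j = 1" "j \<in> K"
    and "0 < h" "rho h w (insert p K) = 1"
  shows "shapley h w (insert p K) j = (1 - shapley h w (insert p K) p) / card K"
proof -
  define \<phi> where "\<phi> = shapley h w (insert p K)"
  have same: "\<phi> j' = \<phi> j" if "j' \<in> K" for j'
  proof -
    have "w (transpose j j' x) = w x" for x
      using assms(3,4) that by (simp add: transpose_def)
    then have "\<phi> (transpose j j' j) = \<phi> j"
      unfolding \<phi>_def shapley_eq_shapley_value
      by (intro shapley_value_bij_invariant) (use assms(4) that in \<open>auto simp: rho_image\<close>)
    then show ?thesis by simp
  qed
  have "rho h w {} = 0" using assms(5) by (simp add: rho_def stake_def)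
  then have "\<phi> p + (\<Sum>j'\<in>K. \<phi> j') = 1"
    using shapley_value_efficient[of "insert p K" "rho h w"] assms(1,2,6)
    by (simp add: \<phi>_def shapley_eq_shapley_value)
  then have "\<phi> p + card K * \<phi> j = 1" using same by simp
  moreover have "card K > 0" using assms(1,4) card_gt_0_iff by blast
  ultimately show ?thesis unfolding \<phi>_def by (simp add: field_simps)
qed

theorem lemma3p7:
  fixes h a k :: nat and w :: "'a \<Rightarrow> nat" and p :: 'a and K :: "'a set"
  assumes ha: "2 \<le> a" "a \<le> h - 1"
    and two_valued: "\<forall>i. w i = 1 \<or> w i = a"
    and large: "w p = a"
    and small: "\<forall>j\<in>K. w j = 1"
    and fin: "finite K" and notin: "p \<notin> K" and cardK: "card K = k"
    and winning: "rho h w (insert p K) = 1"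
  shows "(k < h \<longrightarrow> shapley h w (insert p K) p = (real k - real h + real a + 1) / (real k + 1)
              \<and> (\<forall>j\<in>K. shapley h w (insert p K) j = (real h - real a) / (real k * (real k + 1))))
       \<and> (h \<le> k \<longrightarrow> shapley h w (insert p K) p = real a / (real k + 1)
              \<and> (\<forall>j\<in>K. shapley h w (insert p K) j = (real k + 1 - real a) / (real k * (real k + 1))))"
proof -
  let ?\<phi> = "shapley h w (insert p K)"
  have "stake w (insert p K) = a + k"
    using fin notin small large cardK stake_const[of K w 1] by (simp add: stake_insert)
  then have "h - a \<le> k" "a < h" using winning ha by (auto simp: rho_def split: if_splits)
  have large_value: "?\<phi> p = (real (k + 1 - (h - a)) - real (k + 1 - h)) / (k + 1)"
    using shapley_large_player[OF fin notin small] large cardK by simp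
  have small_value: "?\<phi> j = (1 - ?\<phi> p) / k" if "j \<in> K" for j
    using shapley_small_player[OF fin notin small that _ winning] \<open>a < h\<close> cardK by simp
  have "0 < k" if "j \<in> K" for j
    using that fin cardK card_gt_0_iff by blast
  show ?thesis
  proof (intro conjI impI ballI)
    assume "k < h"
    then show p: "?\<phi> p = (real k - real h + real a + 1) / (real k + 1)"
      using large_value \<open>h - a \<le> k\<close> \<open>a < h\<close> by (simp add: algebra_simps)
    fix j assume "j \<in> K"
    then show "?\<phi> j = (real h - real a) / (real k * (real k + 1))"
      using small_value p \<open>\<And>j. j \<in> K \<Longrightarrow> 0 < k\<close> by (simp add: field_simps)
  next
    assume "h \<le> k"
    then show p: "?\<phi> p = real a / (real k + 1)"
      using large_value \<open>a < h\<close> by simp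
    fix j assume "j \<in> K"
    then show "?\<phi> j = (real k + 1 - real a) / (real k * (real k + 1))"
      using small_value p \<open>\<And>j. j \<in> K \<Longrightarrow> 0 < k\<close> by (simp add: field_simps)
  qed
qed

end
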